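(* Let $d:\mathbb{Z}\to\mathbb{C}$ be bounded and $(Ju)(n)=u(n-1)+d(n)u(n)+u(n+1)$ on $\ell^2(\mathbb{Z})$. Let $a+ib$ ($a,b\in\mathbb{R}$) be a boundary eigenvalue of $J$ and assume that $\Im(d(n))\ne b$ for infinitely many $n\in\mathbb{Z}$. Then $$\inf\sigma_{ess}(J_0+\Re(D))\le a\le\sup\sigma_{ess}(J_0+\Re(D)).$$
   Context: $J_0$ is the operator $(J_0u)(n)=u(n-1)+u(n+1)$ on $\ell^2(\mathbb{Z})$ and $\Re(D)$ is multiplication by $\Re(d(n))$. $\sigma_{ess}$ denotes the essential spectrum. The numerical range is $\operatorname{Num}(J)=\{\langle Ju,u\rangle:\|u\|=1\}$, and a boundary eigenvalue of $J$ is an eigenvalue of $J$ lying in the topological boundary of $\operatorname{Num}(J)$. *)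

theory Defs
  imports "HOL-Analysis.Analysis"
begin

definition l2 :: "(int \<Rightarrow> complex) set" where
  "l2 = {u. (\<lambda>n. (cmod (u n))\<^sup>2) summable_on UNIV}"

definition l2_inner :: "(int \<Rightarrow> complex) \<Rightarrow> (int \<Rightarrow> complex) \<Rightarrow> complex" where
  "l2_inner u v = (\<Sum>\<^sub>\<infinity>n. u n * cnj (v n))"

definition l2_norm :: "(int \<Rightarrow> complex) \<Rightarrow> real" where
  "l2_norm u = sqrt (\<Sum>\<^sub>\<infinity>n. (cmod (u n))\<^sup>2)"

text \<open>(J u)(n) = u(n-1) + d(n) u(n) + u(n+1). With d = 0 this is J_0, and with
  d replaced by Re d it is J_0 + Re(D).\<close>
definition jacobi :: "(int \<Rightarrow> complex) \<Rightarrow> (int \<Rightarrow> complex) \<Rightarrow> (int \<Rightarrow> complex)" where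
  "jacobi d u = (\<lambda>n. u (n - 1) + d n * u n + u (n + 1))"

definition num_range :: "((int \<Rightarrow> complex) \<Rightarrow> (int \<Rightarrow> complex)) \<Rightarrow> complex set" where
  "num_range A = {l2_inner (A u) u | u. u \<in> l2 \<and> l2_norm u = 1}"

definition is_eigenvalue :: "((int \<Rightarrow> complex) \<Rightarrow> (int \<Rightarrow> complex)) \<Rightarrow> complex \<Rightarrow> bool" where
  "is_eigenvalue A z \<longleftrightarrow> (\<exists>u\<in>l2. u \<noteq> (\<lambda>_. 0) \<and> A u = (\<lambda>n. z * u n))"

definition boundary_eigenvalue :: "((int \<Rightarrow> complex) \<Rightarrow> (int \<Rightarrow> complex)) \<Rightarrow> complex \<Rightarrow> bool" where
  "boundary_eigenvalue A z \<longleftrightarrow> is_eigenvalue A z \<and> z \<in> frontier (num_range A)"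

text \<open>For bounded self-adjoint
  operators (the only case used) this coincides with every standard definition.\<close>
definition ess_spectrum :: "((int \<Rightarrow> complex) \<Rightarrow> (int \<Rightarrow> complex)) \<Rightarrow> complex set" where
  "ess_spectrum A = {z. \<exists>u :: nat \<Rightarrow> int \<Rightarrow> complex.
      (\<forall>k. u k \<in> l2 \<and> l2_norm (u k) = 1) \<and>
      (\<forall>v\<in>l2. (\<lambda>k. l2_inner (u k) v) \<longlonglongrightarrow> 0) \<and>
      (\<lambda>k. l2_norm (\<lambda>n. A (u k) n - z * u k n)) \<longlonglongrightarrow> 0}"

end

theory Submission
  imports Defs
begin

text \<open>Let \<open>u\<close> be an eigenvector of \<open>J\<close> for a boundary eigenvalue \<open>a + i b\<close>. For every
  finitely supported \<open>w \<bottom> u\<close> one has \<open>\<langle>J w, u\<rangle> = 0\<close>: otherwise the Rayleigh quotients of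
  the vectors \<open>u + z w\<close> would, by Brouwer's fixed point theorem, fill a whole disc around
  \<open>a + i b\<close>. Hence \<open>u\<close> is also an eigenvector of the adjoint, \<open>Im d = b\<close> on the support
  of \<open>u\<close>, and \<open>(J\<^sub>0 + Re D) u = a u\<close>. Since \<open>Im d \<noteq> b\<close> infinitely often, \<open>u\<close> has infinitely
  many zeros, and cutting \<open>u\<close> off at two zeros far out gives finitely supported unit
  vectors, arbitrarily far away, with Rayleigh quotient \<open>a\<close>.

  For a symmetric operator of bandwidth one, such vectors produce a point \<open>L \<ge> a\<close> of the
  essential spectrum: the suprema of the Rayleigh quotient over unit vectors vanishing on
  \<open>[-N, N]\<close> decrease to some \<open>L \<ge> a\<close>, and near-maximisers form a singular Weyl sequence for
  \<open>L\<close>. Applied to \<open>\<plusminus>(J\<^sub>0 + Re D)\<close> this gives points of the essential spectrum on both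
  sides of \<open>a\<close>.\<close>

definition l2_sqnorm :: "(int \<Rightarrow> complex) \<Rightarrow> real" where
  "l2_sqnorm u = (\<Sum>\<^sub>\<infinity>n. (cmod (u n))\<^sup>2)"

lemma l2_norm_eq_sqrt_sqnorm: "l2_norm u = sqrt (l2_sqnorm u)"
  by (simp add: l2_norm_def l2_sqnorm_def)

lemma l2_sqnorm_nonneg: "0 \<le> l2_sqnorm u"
  unfolding l2_sqnorm_def by (rule infsum_nonneg) simp

lemma l2_iff_summable: "u \<in> l2 \<longleftrightarrow> (\<lambda>n. (cmod (u n))\<^sup>2) summable_on UNIV"
  by (simp add: l2_def)

lemma l2_has_sum_sqnorm: "u \<in> l2 \<Longrightarrow> ((\<lambda>n. (cmod (u n))\<^sup>2) has_sum l2_sqnorm u) UNIV"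
  unfolding l2_iff_summable l2_sqnorm_def by (rule has_sum_infsum)

lemma infsum_finite_support:
  fixes f :: "'a \<Rightarrow> 'b::{comm_monoid_add,t2_space}"
  assumes "finite S" "\<And>n. n \<notin> S \<Longrightarrow> f n = 0"
  shows "infsum f UNIV = sum f S"
  using assms by (subst infsum_cong_neutral[where T = S and g = f]) auto

lemma summable_on_finite_support:
  fixes f :: "'a \<Rightarrow> 'b::{comm_monoid_add,topological_space}"
  assumes "finite {n. f n \<noteq> 0}"
  shows "f summable_on UNIV"
  using assms by (subst summable_on_cong_neutral[where T = "{n. f n \<noteq> 0}" and g = f]) auto

lemma l2_finite_support: "finite {n. u n \<noteq> 0} \<Longrightarrow> u \<in> l2"
  unfolding l2_iff_summable by (rule summable_on_finite_support) simp

lemma finite_support_mult_left: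
  "finite {n. f n \<noteq> 0} \<Longrightarrow> finite {n. g n * f n \<noteq> (0::'a::mult_zero)}"
  by (rule finite_subset[rotated]) auto

lemma finite_support_add:
  "finite {n. f n \<noteq> 0} \<Longrightarrow> finite {n. g n \<noteq> 0} \<Longrightarrow> finite {n. f n + g n \<noteq> (0::'a::monoid_add)}"
  by (rule finite_subset[of _ "{n. f n \<noteq> 0} \<union> {n. g n \<noteq> 0}"]) auto

lemma bij_plus_int: "bij (\<lambda>n::int. n + k)"
  by (rule bij_betwI[where g = "\<lambda>n. n - k"]) auto

lemma infsum_shift: "(\<Sum>\<^sub>\<infinity>n. f (n + k)) = (\<Sum>\<^sub>\<infinity>n::int. f n)"
  using infsum_reindex_bij_betw[OF bij_plus_int[of k], of f] by simp

lemma summable_on_shift: "(\<lambda>n. f (n + k)) summable_on UNIV \<longleftrightarrow> f summable_on (UNIV::int set)"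
  using summable_on_reindex_bij_betw[OF bij_plus_int[of k], of f] by simp

lemma l2_shift: "u \<in> l2 \<Longrightarrow> (\<lambda>n. u (n + k)) \<in> l2"
  unfolding l2_iff_summable using summable_on_shift[of "\<lambda>n. (cmod (u n))\<^sup>2" k] by simp

lemma l2_sqnorm_shift: "l2_sqnorm (\<lambda>n. u (n + k)) = l2_sqnorm u"
  unfolding l2_sqnorm_def using infsum_shift[of "\<lambda>n. (cmod (u n))\<^sup>2" k] by simp

lemma l2_inner_shift: "l2_inner (\<lambda>n. x (n + k)) y = l2_inner x (\<lambda>n. y (n - k))"
  unfolding l2_inner_def using infsum_shift[of "\<lambda>n. x (n + k) * cnj (y n)" "-k"] by simp

lemma square_sum_le: "((x::real) + y)\<^sup>2 \<le> 2 * x\<^sup>2 + 2 * y\<^sup>2"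
  using sum_squares_bound[of x y] by (simp add: power2_sum)

lemma square_norm_add_le: "(cmod (x + y))\<^sup>2 \<le> 2 * (cmod x)\<^sup>2 + 2 * (cmod y)\<^sup>2"
  by (rule order_trans[OF power_mono[OF norm_triangle_ineq] square_sum_le]) simp

lemma l2_scale: "f \<in> l2 \<Longrightarrow> (\<lambda>n. t * f n) \<in> l2"
  unfolding l2_iff_summable by (simp add: norm_mult power_mult_distrib summable_on_cmult_right)

lemma l2_sqnorm_scale: "l2_sqnorm (\<lambda>n. t * x n) = (cmod t)\<^sup>2 * l2_sqnorm x"
  unfolding l2_sqnorm_def by (simp add: norm_mult power_mult_distrib infsum_cmult_right')

lemma l2_sqnorm_uminus: "l2_sqnorm (\<lambda>n. - u n) = l2_sqnorm u"
  by (simp add: l2_sqnorm_def)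

lemma l2_add:
  assumes "f \<in> l2" "g \<in> l2"
  shows "(\<lambda>n. f n + g n) \<in> l2"
proof -
  have "(\<lambda>n. 2 * (cmod (f n))\<^sup>2 + 2 * (cmod (g n))\<^sup>2) summable_on UNIV"
    using assms unfolding l2_iff_summable by (intro summable_on_add summable_on_cmult_right)
  then show ?thesis
    unfolding l2_iff_summable
    by (rule summable_on_comparison_test) (simp_all only: square_norm_add_le zero_le_power2)
qed

lemma l2_add_scaled: "f \<in> l2 \<Longrightarrow> g \<in> l2 \<Longrightarrow> (\<lambda>n. f n + t * g n) \<in> l2"
  by (intro l2_add l2_scale)

lemma l2_sqnorm_add_le:
  assumes "f \<in> l2" "g \<in> l2"
  shows "l2_sqnorm (\<lambda>n. f n + g n) \<le> 2 * l2_sqnorm f + 2 * l2_sqnorm g"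
proof (rule has_sum_mono)
  show "((\<lambda>n. (cmod (f n + g n))\<^sup>2) has_sum l2_sqnorm (\<lambda>n. f n + g n)) UNIV"
    using l2_add[OF assms] by (rule l2_has_sum_sqnorm)
  show "((\<lambda>n. 2 * (cmod (f n))\<^sup>2 + 2 * (cmod (g n))\<^sup>2) has_sum 2 * l2_sqnorm f + 2 * l2_sqnorm g) UNIV"
    using assms by (intro has_sum_add has_sum_cmult_right l2_has_sum_sqnorm)
qed (rule square_norm_add_le)

lemma l2_sqnorm_eq_0D: "u \<in> l2 \<Longrightarrow> l2_sqnorm u = 0 \<Longrightarrow> u n = 0"
  using nonneg_infsum_le_0D[of "\<lambda>n. (cmod (u n))\<^sup>2" UNIV n]
  by (simp add: l2_sqnorm_def l2_iff_summable)

lemma l2_sqnorm_pos: "u \<in> l2 \<Longrightarrow> u n \<noteq> 0 \<Longrightarrow> 0 < l2_sqnorm u"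
  using l2_sqnorm_eq_0D[of u n] l2_sqnorm_nonneg[of u] by linarith

lemma l2_sqnorm_normalize:
  "0 < l2_sqnorm u \<Longrightarrow> l2_sqnorm (\<lambda>n. complex_of_real (inverse (sqrt (l2_sqnorm u))) * u n) = 1"
  by (simp add: l2_sqnorm_scale norm_inverse power_inverse)

lemma l2_inner_summable:
  assumes "f \<in> l2" "g \<in> l2"
  shows "(\<lambda>n. f n * cnj (g n)) summable_on UNIV"
proof -
  have "(\<lambda>n. norm (f n * cnj (g n))) summable_on UNIV"
  proof (rule summable_on_comparison_test)
    show "(\<lambda>n. (cmod (f n))\<^sup>2 + (cmod (g n))\<^sup>2) summable_on UNIV"
      using assms unfolding l2_iff_summable by (rule summable_on_add)
    show "norm (f n * cnj (g n)) \<le> (cmod (f n))\<^sup>2 + (cmod (g n))\<^sup>2" for n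
      using sum_squares_bound[of "cmod (f n)" "cmod (g n)"]
        mult_nonneg_nonneg[OF norm_ge_zero norm_ge_zero, of "f n" "g n"]
      unfolding norm_mult complex_mod_cnj by linarith
  qed simp
  then show ?thesis using summable_on_iff_abs_summable_on_complex by blast
qed

lemma l2_inner_commute: "l2_inner y x = cnj (l2_inner x y)"
  unfolding l2_inner_def infsum_cnj[symmetric] by (simp add: mult.commute)

lemma l2_inner_add_scaled_left:
  assumes "x \<in> l2" "y \<in> l2" "z \<in> l2"
  shows "l2_inner (\<lambda>n. x n + t * y n) z = l2_inner x z + t * l2_inner y z"
proof -
  have "l2_inner (\<lambda>n. x n + t * y n) z = (\<Sum>\<^sub>\<infinity>n. x n * cnj (z n) + t * (y n * cnj (z n)))"
    unfolding l2_inner_def by (simp add: algebra_simps)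
  also have "\<dots> = l2_inner x z + t * l2_inner y z"
    unfolding l2_inner_def using assms
    by (simp add: infsum_add summable_on_cmult_right l2_inner_summable infsum_cmult_right')
  finally show ?thesis .
qed

lemma l2_inner_add_scaled_right:
  assumes "x \<in> l2" "y \<in> l2" "z \<in> l2"
  shows "l2_inner x (\<lambda>n. y n + t * z n) = l2_inner x y + cnj t * l2_inner x z"
  using l2_inner_add_scaled_left[OF assms(2,3,1), of t]
  by (subst l2_inner_commute) (simp add: l2_inner_commute[of x])

lemma l2_inner_scale_left: "l2_inner (\<lambda>n. t * x n) z = t * l2_inner x z"
  unfolding l2_inner_def by (simp add: infsum_cmult_right'[symmetric] mult.assoc)

lemma l2_inner_scale_right: "l2_inner x (\<lambda>n. t * z n) = cnj t * l2_inner x z"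
  by (subst l2_inner_commute) (simp add: l2_inner_scale_left l2_inner_commute[of x])

lemma l2_inner_self: "x \<in> l2 \<Longrightarrow> l2_inner x x = complex_of_real (l2_sqnorm x)"
  unfolding l2_inner_def
  by (rule infsumI, drule has_sum_of_real[OF l2_has_sum_sqnorm])
     (simp add: complex_mult_cnj cmod_def)

lemma norm_l2_inner_le:
  assumes "f \<in> l2" "g \<in> l2"
  shows "cmod (l2_inner f g) \<le> (l2_sqnorm f + l2_sqnorm g) / 2"
proof (rule norm_infsum_le)
  show "((\<lambda>n. f n * cnj (g n)) has_sum l2_inner f g) UNIV"
    unfolding l2_inner_def using l2_inner_summable[OF assms] by (rule has_sum_infsum)
  show "((\<lambda>n. ((cmod (f n))\<^sup>2 + (cmod (g n))\<^sup>2) / 2) has_sum ((l2_sqnorm f + l2_sqnorm g) / 2)) UNIV"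
    using assms by (intro has_sum_divide_const has_sum_add l2_has_sum_sqnorm)
  show "norm (f n * cnj (g n)) \<le> ((cmod (f n))\<^sup>2 + (cmod (g n))\<^sup>2) / 2" for n
    using sum_squares_bound[of "cmod (f n)" "cmod (g n)"] by (simp add: norm_mult)
qed

lemma l2_sqnorm_add_scaled:
  assumes v: "v \<in> l2" and w: "w \<in> l2"
  shows "l2_sqnorm (\<lambda>n. v n + complex_of_real s * w n)
    = l2_sqnorm v + 2 * s * Re (l2_inner v w) + s\<^sup>2 * l2_sqnorm w"
proof -
  have vw: "(\<lambda>n. v n + complex_of_real s * w n) \<in> l2" using v w by (rule l2_add_scaled)
  have "complex_of_real (l2_sqnorm (\<lambda>n. v n + complex_of_real s * w n))
      = l2_inner v v + s * l2_inner v w + s * (l2_inner w v + s * l2_inner w w)"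
    by (simp add: l2_inner_self[OF vw, symmetric] l2_inner_add_scaled_left[OF v w vw]
        l2_inner_add_scaled_right[OF v v w] l2_inner_add_scaled_right[OF w v w])
  from arg_cong[OF this, of Re] show ?thesis
    by (simp add: l2_inner_self v w l2_inner_commute[of w v] power2_eq_square algebra_simps)
qed

lemma jacobi_add_scaled: "jacobi d (\<lambda>n. x n + t * y n) = (\<lambda>n. jacobi d x n + t * jacobi d y n)"
  unfolding jacobi_def by (auto simp: algebra_simps)

lemma jacobi_scale: "jacobi d (\<lambda>n. t * x n) = (\<lambda>n. t * jacobi d x n)"
  unfolding jacobi_def by (auto simp: algebra_simps)

lemma jacobi_finite_support:
  assumes "finite {n. x n \<noteq> 0}"
  shows "finite {n. jacobi d x n \<noteq> 0}"
proof (rule finite_subset)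
  let ?S = "{n. x n \<noteq> 0}"
  show "{n. jacobi d x n \<noteq> 0} \<subseteq> (\<lambda>n. n + 1) ` ?S \<union> ?S \<union> (\<lambda>n. n - 1) ` ?S"
  proof
    fix n assume "n \<in> {n. jacobi d x n \<noteq> 0}"
    then have "n - 1 \<in> ?S \<or> n \<in> ?S \<or> n + 1 \<in> ?S" by (auto simp: jacobi_def)
    then show "n \<in> (\<lambda>n. n + 1) ` ?S \<union> ?S \<union> (\<lambda>n. n - 1) ` ?S"
      by (auto intro: image_eqI[where x = "n - 1"] image_eqI[where x = "n + 1"])
  qed
qed (use assms in simp)

lemma jacobi_local: "(\<And>m. \<bar>m\<bar> \<le> N + 1 \<Longrightarrow> x m = 0) \<Longrightarrow> \<bar>n\<bar> \<le> N \<Longrightarrow> jacobi d x n = 0"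
  unfolding jacobi_def by simp

lemma l2_mult_bounded:
  assumes "\<And>n. cmod (e n) \<le> C" "x \<in> l2"
  shows "(\<lambda>n. e n * x n) \<in> l2"
proof -
  have "(\<lambda>n. C\<^sup>2 * (cmod (x n))\<^sup>2) summable_on UNIV"
    using assms(2) unfolding l2_iff_summable by (rule summable_on_cmult_right)
  then show ?thesis
    unfolding l2_iff_summable
  proof (rule summable_on_comparison_test)
    show "(cmod (e n * x n))\<^sup>2 \<le> C\<^sup>2 * (cmod (x n))\<^sup>2" for n
      using assms(1)[of n] by (simp add: norm_mult power_mult_distrib[symmetric] mult_right_mono power_mono)
  qed simp
qed

lemma square_sum3_le: "((x::real) + y + z)\<^sup>2 \<le> 3 * (x\<^sup>2 + y\<^sup>2 + z\<^sup>2)"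
proof -
  have "0 \<le> (x - y)\<^sup>2 + (y - z)\<^sup>2 + (x - z)\<^sup>2" by simp
  then show ?thesis by (simp add: power2_eq_square algebra_simps)
qed

lemma jacobi_l2_bound:
  assumes d: "\<And>n. cmod (d n) \<le> C" and x: "x \<in> l2"
  shows "jacobi d x \<in> l2" "l2_sqnorm (jacobi d x) \<le> 3 * (2 + C\<^sup>2) * l2_sqnorm x"
proof -
  let ?g = "\<lambda>n. 3 * ((cmod (x (n - 1)))\<^sup>2 + C\<^sup>2 * (cmod (x n))\<^sup>2 + (cmod (x (n + 1)))\<^sup>2)"
  have shifted: "((\<lambda>n. (cmod (x (n + k)))\<^sup>2) has_sum l2_sqnorm x) UNIV" for k
    using l2_has_sum_sqnorm[OF l2_shift[OF x, of k]] by (simp add: l2_sqnorm_shift)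
  have "(?g has_sum 3 * (l2_sqnorm x + C\<^sup>2 * l2_sqnorm x + l2_sqnorm x)) UNIV"
    using shifted[of "-1"] shifted[of 0] shifted[of 1]
    by (intro has_sum_cmult_right has_sum_add) (simp_all add: has_sum_cmult_right)
  moreover have pointwise: "(cmod (jacobi d x n))\<^sup>2 \<le> ?g n" for n
  proof -
    have "cmod (jacobi d x n) \<le> cmod (x (n - 1)) + C * cmod (x n) + cmod (x (n + 1))"
      using norm_triangle_ineq[of "x (n - 1) + d n * x n" "x (n + 1)"]
        norm_triangle_ineq[of "x (n - 1)" "d n * x n"]
        mult_right_mono[OF d[of n] norm_ge_zero[of "x n"]]
      unfolding jacobi_def norm_mult by linarith
    then have "(cmod (jacobi d x n))\<^sup>2 \<le> (cmod (x (n - 1)) + C * cmod (x n) + cmod (x (n + 1)))\<^sup>2"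
      by (intro power_mono) auto
    also have "\<dots> \<le> ?g n"
      using square_sum3_le[of "cmod (x (n - 1))" "C * cmod (x n)" "cmod (x (n + 1))"]
      by (simp add: power_mult_distrib)
    finally show ?thesis .
  qed
  ultimately show l2: "jacobi d x \<in> l2"
    unfolding l2_iff_summable by (intro summable_on_comparison_test[OF has_sum_imp_summable]) auto
  show "l2_sqnorm (jacobi d x) \<le> 3 * (2 + C\<^sup>2) * l2_sqnorm x"
    using has_sum_mono[OF l2_has_sum_sqnorm[OF l2] \<open>(?g has_sum _) UNIV\<close> pointwise]
    by (simp add: algebra_simps)
qed

lemma jacobi_real_symmetric:
  fixes c :: "int \<Rightarrow> real"
  assumes c: "\<And>n. \<bar>c n\<bar> \<le> C" and x: "x \<in> l2" and y: "y \<in> l2"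
  shows "l2_inner (jacobi (\<lambda>n. of_real (c n)) x) y = l2_inner x (jacobi (\<lambda>n. of_real (c n)) y)"
proof -
  let ?c = "\<lambda>n. complex_of_real (c n)"
  have c': "cmod (?c n) \<le> C" for n using c by simp
  have cx: "(\<lambda>n. ?c n * x n) \<in> l2" and cy: "(\<lambda>n. ?c n * y n) \<in> l2"
    using l2_mult_bounded[OF c'] x y by auto
  have x_shift: "(\<lambda>n. x (n - 1)) \<in> l2" "(\<lambda>n. x (n + 1)) \<in> l2"
    using l2_shift[OF x, of "-1"] l2_shift[OF x, of 1] by simp_all
  have y_shift: "(\<lambda>n. y (n - 1)) \<in> l2" "(\<lambda>n. y (n + 1)) \<in> l2"
    using l2_shift[OF y, of "-1"] l2_shift[OF y, of 1] by simp_all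
  have shifts: "l2_inner (\<lambda>n. x (n - 1)) y = l2_inner x (\<lambda>n. y (n + 1))"
    "l2_inner (\<lambda>n. x (n + 1)) y = l2_inner x (\<lambda>n. y (n - 1))"
    using l2_inner_shift[of x "-1" y] l2_inner_shift[of x 1 y] by simp_all
  have diagonal: "l2_inner (\<lambda>n. ?c n * x n) y = l2_inner x (\<lambda>n. ?c n * y n)"
    unfolding l2_inner_def by (simp add: mult.assoc mult.left_commute)
  have "l2_inner (jacobi ?c x) y
      = l2_inner (\<lambda>n. x (n - 1)) y + l2_inner (\<lambda>n. ?c n * x n) y + l2_inner (\<lambda>n. x (n + 1)) y"
    using l2_inner_add_scaled_left[OF l2_add[OF x_shift(1) cx] x_shift(2) y, of 1]
      l2_inner_add_scaled_left[OF x_shift(1) cx y, of 1]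
    by (simp add: jacobi_def)
  also have "\<dots> = l2_inner x (\<lambda>n. y (n + 1)) + l2_inner x (\<lambda>n. ?c n * y n) + l2_inner x (\<lambda>n. y (n - 1))"
    unfolding diagonal shifts ..
  also have "\<dots> = l2_inner x (jacobi ?c y)"
    using l2_inner_add_scaled_right[OF x l2_add[OF y_shift(1) cy] y_shift(2), of 1]
      l2_inner_add_scaled_right[OF x y_shift(1) cy, of 1]
    by (simp add: jacobi_def)
  finally show ?thesis .
qed

section \<open>Weyl sequences for symmetric band operators\<close>

definition far_unit_vectors :: "int \<Rightarrow> (int \<Rightarrow> complex) set" where
  "far_unit_vectors N =
    {x. finite {n. x n \<noteq> 0} \<and> (\<forall>m. \<bar>m\<bar> \<le> N \<longrightarrow> x m = 0) \<and> l2_sqnorm x = 1}"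

lemma far_unit_vectors_nonempty: "far_unit_vectors N \<noteq> {}"
proof -
  define e where "e = (\<lambda>n. if n = \<bar>N\<bar> + 1 then 1 else 0 :: complex)"
  have "l2_sqnorm e = (\<Sum>n\<in>{\<bar>N\<bar> + 1}. (cmod (e n))\<^sup>2)"
    unfolding l2_sqnorm_def by (rule infsum_finite_support) (auto simp: e_def)
  then have "e \<in> far_unit_vectors N"
    unfolding far_unit_vectors_def by (auto simp: e_def)
  then show ?thesis by blast
qed

lemma l2_inner_far_small:
  assumes w: "w \<in> l2" and e: "0 < e"
  shows "\<exists>B. \<forall>N\<ge>B. \<forall>v\<in>far_unit_vectors N. cmod (l2_inner v w) \<le> e"
proof -
  let ?g = "\<lambda>n. (cmod (w n))\<^sup>2"
  obtain F where F: "finite F" "dist (sum ?g F) (l2_sqnorm w) \<le> e\<^sup>2"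
    using infsum_finite_approximation[OF w[unfolded l2_iff_summable], of "e\<^sup>2"] e
    unfolding l2_sqnorm_def by auto
  define B where "B = Max (insert 0 (abs ` F))"
  have FB: "n \<in> F \<Longrightarrow> \<bar>n\<bar> \<le> B" for n unfolding B_def using F(1) by auto
  show ?thesis
  proof (intro exI[of _ B] allI impI ballI)
    fix N v assume "B \<le> N" "v \<in> far_unit_vectors N"
    then have S: "finite {n. v n \<noteq> 0}" and outside: "\<And>m. \<bar>m\<bar> \<le> N \<Longrightarrow> v m = 0"
      and unit: "l2_sqnorm v = 1" and SF: "{n. v n \<noteq> 0} \<inter> F = {}"
      using FB unfolding far_unit_vectors_def by force+
    let ?S = "{n. v n \<noteq> 0}"
    have "sum ?g ?S + sum ?g F = sum ?g (?S \<union> F)"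
      using S F(1) SF by (simp add: sum.union_disjoint)
    also have "\<dots> \<le> l2_sqnorm w"
      unfolding l2_sqnorm_def
      by (rule finite_sum_le_infsum[OF w[unfolded l2_iff_summable]]) (use S F(1) in auto)
    finally have tail: "sum ?g ?S \<le> e\<^sup>2" using F(2) by (simp add: dist_real_def abs_le_iff)
    have v_unit: "(\<Sum>n\<in>?S. (cmod (v n))\<^sup>2) = 1"
      using unit unfolding l2_sqnorm_def by (subst (asm) infsum_finite_support[OF S]) auto
    have "cmod (l2_inner v w) = cmod (\<Sum>n\<in>?S. v n * cnj (w n))"
      unfolding l2_inner_def by (subst infsum_finite_support[OF S]) auto
    also have "\<dots> \<le> (\<Sum>n\<in>?S. cmod (v n) * cmod (w n))"
      by (rule order_trans[OF norm_sum]) (simp add: norm_mult)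
    also have "\<dots> \<le> (\<Sum>n\<in>?S. (e * (cmod (v n))\<^sup>2 + (cmod (w n))\<^sup>2 / e) / 2)"
    proof (rule sum_mono)
      fix n
      have "0 \<le> (e * cmod (v n) - cmod (w n))\<^sup>2" by simp
      then show "cmod (v n) * cmod (w n) \<le> (e * (cmod (v n))\<^sup>2 + (cmod (w n))\<^sup>2 / e) / 2"
        using e by (simp add: power2_diff power_mult_distrib field_simps power2_eq_square)
    qed
    also have "\<dots> = (e * 1 + sum ?g ?S / e) / 2"
      by (simp add: v_unit sum_divide_distrib[symmetric] sum_distrib_left[symmetric] sum.distrib)
    also have "\<dots> \<le> (e + e\<^sup>2 / e) / 2"
      using tail e by (simp add: divide_right_mono)
    also have "\<dots> = e" using e by (simp add: power2_eq_square)
    finally show "cmod (l2_inner v w) \<le> e" .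
  qed
qed

lemma far_unit_vectors_antimono: "N \<le> N' \<Longrightarrow> far_unit_vectors N' \<subseteq> far_unit_vectors N"
  unfolding far_unit_vectors_def by auto

lemma far_unit_vectors_weakly_null:
  assumes v: "\<And>k. v k \<in> far_unit_vectors (int k)" and w: "w \<in> l2"
  shows "(\<lambda>k. l2_inner (v k) w) \<longlonglongrightarrow> 0"
proof (rule LIMSEQ_I)
  fix r :: real assume r: "0 < r"
  obtain B where B: "\<And>N v. B \<le> N \<Longrightarrow> v \<in> far_unit_vectors N \<Longrightarrow> cmod (l2_inner v w) \<le> r / 2"
    using l2_inner_far_small[OF w, of "r / 2"] r by auto
  have "cmod (l2_inner (v k) w) < r" if "nat B \<le> k" for k
    using B[OF _ v[of k]] that r by fastforce
  then show "\<exists>k0. \<forall>k\<ge>k0. norm (l2_inner (v k) w - 0) < r" by auto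
qed

lemma ess_spectrum_uminus:
  assumes "z \<in> ess_spectrum (\<lambda>x n. - A x n)"
  shows "- z \<in> ess_spectrum A"
proof -
  have "l2_norm (\<lambda>n. - A x n - z * x n) = l2_norm (\<lambda>n. A x n - (- z) * x n)" for x
    unfolding l2_norm_eq_sqrt_sqnorm l2_sqnorm_def by (simp add: norm_minus_commute[of "- A x _"] algebra_simps)
  then show ?thesis using assms unfolding ess_spectrum_def by simp
qed

locale symmetric_band_operator =
  fixes A :: "(int \<Rightarrow> complex) \<Rightarrow> int \<Rightarrow> complex" and C :: real
  assumes add_scaled: "A (\<lambda>n. x n + t * y n) = (\<lambda>n. A x n + t * A y n)"
    and locality: "(\<And>m. \<bar>m\<bar> \<le> N + 1 \<Longrightarrow> x m = 0) \<Longrightarrow> \<bar>n\<bar> \<le> N \<Longrightarrow> A x n = 0"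
    and finite_support: "finite {n. x n \<noteq> 0} \<Longrightarrow> finite {n. A x n \<noteq> 0}"
    and symmetric:
      "finite {n. x n \<noteq> 0} \<Longrightarrow> finite {n. y n \<noteq> 0} \<Longrightarrow> l2_inner (A x) y = l2_inner x (A y)"
    and norm_bound: "finite {n. x n \<noteq> 0} \<Longrightarrow> l2_sqnorm (A x) \<le> C * l2_sqnorm x"
begin

lemma zero: "A (\<lambda>n. 0) = (\<lambda>n. 0)"
  using add_scaled[of "\<lambda>n. 0" 1 "\<lambda>n. 0"] by (simp add: fun_eq_iff)

lemma scale: "A (\<lambda>n. t * x n) = (\<lambda>n. t * A x n)"
  using add_scaled[of "\<lambda>n. 0" t x] by (simp add: zero)

definition quad :: "(int \<Rightarrow> complex) \<Rightarrow> real" where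
  "quad x = Re (l2_inner (A x) x)"

lemma quad_bound:
  assumes "finite {n. x n \<noteq> 0}"
  shows "\<bar>quad x\<bar> \<le> (C + 1) / 2 * l2_sqnorm x"
proof -
  have "\<bar>quad x\<bar> \<le> (l2_sqnorm (A x) + l2_sqnorm x) / 2"
    unfolding quad_def using assms
    by (intro order_trans[OF abs_Re_le_cmod] norm_l2_inner_le l2_finite_support finite_support)
  with norm_bound[OF assms] show ?thesis by (simp add: field_simps)
qed

lemma quad_scale: "quad (\<lambda>n. t * x n) = (cmod t)\<^sup>2 * quad x"
  unfolding quad_def scale l2_inner_scale_left l2_inner_scale_right mult.assoc[symmetric]
  by (simp add: complex_mult_cnj cmod_power2)

lemma quad_add_scaled:
  assumes v: "finite {n. v n \<noteq> 0}" and w: "finite {n. w n \<noteq> 0}"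
  shows "quad (\<lambda>n. v n + complex_of_real s * w n)
    = quad v + 2 * s * Re (l2_inner (A v) w) + s\<^sup>2 * quad w"
proof -
  have l2: "v \<in> l2" "w \<in> l2" "A v \<in> l2" "A w \<in> l2"
    using v w by (auto intro: l2_finite_support finite_support)
  have "l2_inner (A (\<lambda>n. v n + complex_of_real s * w n)) (\<lambda>n. v n + complex_of_real s * w n)
      = l2_inner (A v) v + s * l2_inner (A v) w + s * (l2_inner (A w) v + s * l2_inner (A w) w)"
    unfolding add_scaled
    by (simp add: l2_inner_add_scaled_left l2_inner_add_scaled_right l2_add_scaled l2)
  moreover have "l2_inner (A w) v = cnj (l2_inner (A v) w)"
    using symmetric[OF w v] l2_inner_commute[of "A v" w] by simp
  ultimately show ?thesis
    unfolding quad_def by (simp add: power2_eq_square algebra_simps)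
qed

definition tail_sup :: "int \<Rightarrow> real" where
  "tail_sup N = Sup (quad ` far_unit_vectors N)"

lemma abs_quad_far_le: "x \<in> far_unit_vectors N \<Longrightarrow> \<bar>quad x\<bar> \<le> (C + 1) / 2"
  using quad_bound unfolding far_unit_vectors_def by force

lemma bdd_above_quad_far: "bdd_above (quad ` far_unit_vectors N)"
  by (rule bdd_aboveI) (auto intro: abs_le_D1[OF abs_quad_far_le])

lemma quad_le_tail_sup: "x \<in> far_unit_vectors N \<Longrightarrow> quad x \<le> tail_sup N"
  unfolding tail_sup_def by (rule cSup_upper) (auto intro: bdd_above_quad_far)

lemma tail_sup_le: "tail_sup N \<le> (C + 1) / 2"
  unfolding tail_sup_def using far_unit_vectors_nonempty
  by (intro cSup_least) (blast intro: abs_le_D1[OF abs_quad_far_le])+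

lemma tail_sup_ge: "- ((C + 1) / 2) \<le> tail_sup N"
proof -
  obtain x where x: "x \<in> far_unit_vectors N" using far_unit_vectors_nonempty by blast
  show ?thesis using abs_le_D2[OF abs_quad_far_le[OF x]] quad_le_tail_sup[OF x] by linarith
qed

lemma tail_sup_Suc_le: "tail_sup (N + 1) \<le> tail_sup N"
  unfolding tail_sup_def using far_unit_vectors_nonempty bdd_above_quad_far
  by (intro cSup_subset_mono) (auto simp: far_unit_vectors_def)

lemma quad_le_tail_sup_sqnorm:
  assumes x: "finite {n. x n \<noteq> 0}" "\<forall>m. \<bar>m\<bar> \<le> N \<longrightarrow> x m = 0"
  shows "quad x \<le> tail_sup N * l2_sqnorm x"
proof (cases "l2_sqnorm x = 0")
  case True
  then have "x = (\<lambda>n. 0)" using l2_sqnorm_eq_0D[OF l2_finite_support[OF x(1)]] by auto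
  then show ?thesis by (simp add: quad_def zero l2_inner_def l2_sqnorm_def)
next
  case False
  then have pos: "0 < l2_sqnorm x" using l2_sqnorm_nonneg[of x] by linarith
  let ?y = "\<lambda>n. complex_of_real (inverse (sqrt (l2_sqnorm x))) * x n"
  have "?y \<in> far_unit_vectors N"
    using x l2_sqnorm_normalize[OF pos] finite_support_mult_left[OF x(1)]
    unfolding far_unit_vectors_def by auto
  moreover have "quad ?y = quad x / l2_sqnorm x"
    using pos by (simp add: quad_scale norm_inverse power_inverse divide_inverse)
  ultimately have "quad x / l2_sqnorm x \<le> tail_sup N" using quad_le_tail_sup by metis
  then show ?thesis using pos by (simp add: divide_le_eq)
qed

text \<open>Test the extremality of \<open>M = tail_sup N\<close> against \<open>v - t (M v - A v)\<close>, which still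
  vanishes on \<open>[-N, N]\<close>, with \<open>t = 1 / (C + 2)\<close>.\<close>
lemma tail_sup_variational:
  assumes v: "v \<in> far_unit_vectors (N + 1)"
  shows "l2_sqnorm (\<lambda>n. complex_of_real (tail_sup N) * v n - A v n) \<le> (C + 2) * (tail_sup N - quad v)"
proof -
  define M where "M = tail_sup N"
  define w where "w = (\<lambda>n. complex_of_real M * v n - A v n)"
  define W where "W = l2_sqnorm w"
  define t where "t = 1 / (C + 2)"
  have vf: "finite {n. v n \<noteq> 0}" and v0: "\<And>m. \<bar>m\<bar> \<le> N + 1 \<Longrightarrow> v m = 0" and vn: "l2_sqnorm v = 1"
    using v unfolding far_unit_vectors_def by auto
  have wf: "finite {n. w n \<noteq> 0}"
    by (rule finite_subset[of _ "{n. v n \<noteq> 0} \<union> {n. A v n \<noteq> 0}"])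
       (auto simp: w_def vf finite_support)
  have w0: "\<forall>m. \<bar>m\<bar> \<le> N \<longrightarrow> w m = 0" unfolding w_def using v0 locality[of N v] by auto
  have l2: "v \<in> l2" "w \<in> l2" "A v \<in> l2" using vf wf by (auto intro: l2_finite_support finite_support)
  have t: "0 < t" "t * (C + 1) \<le> 1" "t * (C + 2) = 1"
    using tail_sup_le[of N] tail_sup_ge[of N] unfolding t_def by (auto simp: field_simps)
  have Aw: "Re (l2_inner (A v) w) = M * Re (l2_inner v w) - W"
  proof -
    have "w = (\<lambda>n. complex_of_real M * v n + (-1) * A v n)" unfolding w_def by simp
    then have "l2_inner w w = M * l2_inner v w - l2_inner (A v) w"
      using l2_inner_add_scaled_left[OF l2_scale[OF l2(1)] l2(3) l2(2), of M "-1"]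
      by (simp add: l2_inner_scale_left)
    then have "complex_of_real W = M * l2_inner v w - l2_inner (A v) w"
      unfolding W_def using l2_inner_self[OF l2(2)] by simp
    from arg_cong[OF this, of Re] show ?thesis by simp
  qed
  have "quad (\<lambda>n. v n + complex_of_real (- t) * w n)
      \<le> M * l2_sqnorm (\<lambda>n. v n + complex_of_real (- t) * w n)"
    unfolding M_def using w0 v0
    by (intro quad_le_tail_sup_sqnorm finite_support_add finite_support_mult_left vf wf) auto
  then have "quad v - 2 * t * (M * Re (l2_inner v w) - W) + t\<^sup>2 * quad w
      \<le> M * (1 - 2 * t * Re (l2_inner v w) + t\<^sup>2 * W)"
    unfolding quad_add_scaled[OF vf wf] l2_sqnorm_add_scaled[OF l2(1,2)] Aw vn W_def by simp
  then have "2 * t * W \<le> (M - quad v) + t\<^sup>2 * (M * W - quad w)"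
    by (simp add: algebra_simps)
  also have "t\<^sup>2 * (M * W - quad w) \<le> t\<^sup>2 * ((C + 1) * W)"
  proof (rule mult_left_mono)
    show "M * W - quad w \<le> (C + 1) * W"
      using mult_right_mono[OF tail_sup_le[of N] l2_sqnorm_nonneg[of w]]
        abs_le_D2[OF quad_bound[OF wf]] unfolding M_def W_def by linarith
  qed simp
  also have "t\<^sup>2 * ((C + 1) * W) \<le> t * W"
    using t l2_sqnorm_nonneg[of w] mult_right_mono[OF t(2), of W]
    unfolding W_def power2_eq_square by (simp add: mult_left_mono mult.assoc mult.left_commute)
  finally have tW: "t * W \<le> M - quad v" by linarith
  have "W = (t * (C + 2)) * W" using t(3) by simp
  also have "\<dots> = (C + 2) * (t * W)" by (simp only: ac_simps)
  also have "\<dots> \<le> (C + 2) * (M - quad v)"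
    using tW t by (intro mult_left_mono) (auto simp: t_def field_simps split: if_splits)
  finally show ?thesis unfolding W_def w_def M_def .
qed

lemma norm_bound_nonneg: "0 \<le> C"
proof -
  obtain x where "x \<in> far_unit_vectors 0" using far_unit_vectors_nonempty by blast
  then show ?thesis
    using norm_bound[of x] l2_sqnorm_nonneg[of "A x"] unfolding far_unit_vectors_def by auto
qed

lemma approximate_eigenvector_residual:
  assumes v: "v \<in> far_unit_vectors (N + 1)"
  shows "l2_sqnorm (\<lambda>n. A v n - complex_of_real L * v n)
    \<le> 2 * (C + 2) * (tail_sup N - quad v) + 2 * (tail_sup N - L)\<^sup>2"
proof -
  define w where "w = (\<lambda>n. complex_of_real (tail_sup N) * v n - A v n)"
  have vf: "finite {n. v n \<noteq> 0}" and vn: "l2_sqnorm v = 1"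
    using v unfolding far_unit_vectors_def by auto
  have v_l2: "v \<in> l2" and Av_l2: "A v \<in> l2"
    using vf by (auto intro: l2_finite_support finite_support)
  then have l2: "v \<in> l2" "w \<in> l2"
    unfolding w_def using l2_add_scaled[OF l2_scale[OF v_l2] Av_l2, of _ "-1"] by simp_all
  have "l2_sqnorm (\<lambda>n. A v n - complex_of_real L * v n)
      = l2_sqnorm (\<lambda>n. complex_of_real (tail_sup N - L) * v n + (-1) * w n)"
    by (rule arg_cong[where f = l2_sqnorm]) (simp add: w_def fun_eq_iff algebra_simps)
  also have "\<dots> \<le> 2 * l2_sqnorm (\<lambda>n. complex_of_real (tail_sup N - L) * v n)
      + 2 * l2_sqnorm (\<lambda>n. (-1) * w n)"
    by (intro l2_sqnorm_add_le l2_scale l2)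
  also have "\<dots> = 2 * (tail_sup N - L)\<^sup>2 + 2 * l2_sqnorm w"
    unfolding l2_sqnorm_scale vn by (simp del: of_real_diff)
  also have "\<dots> \<le> 2 * (tail_sup N - L)\<^sup>2 + 2 * ((C + 2) * (tail_sup N - quad v))"
    using tail_sup_variational[OF v] unfolding w_def by simp
  finally show ?thesis by (simp add: algebra_simps)
qed

theorem ess_spectrum_above:
  assumes test: "\<And>N. \<exists>p\<in>far_unit_vectors N. l2_inner (A p) p = complex_of_real a"
  shows "\<exists>L\<ge>a. complex_of_real L \<in> ess_spectrum A"
proof -
  define M where "M k = tail_sup (int k)" for k
  have a_le: "a \<le> tail_sup N" for N
  proof -
    obtain p where "p \<in> far_unit_vectors N" "l2_inner (A p) p = complex_of_real a"
      using test by blast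
    then show ?thesis using quad_le_tail_sup[of p N] by (simp add: quad_def)
  qed
  have "decseq M"
  proof (rule decseq_SucI)
    show "M (Suc k) \<le> M k" for k using tail_sup_Suc_le[of "int k"] by (simp add: M_def add.commute)
  qed
  then obtain L where L: "M \<longlonglongrightarrow> L"
    by (rule decseq_convergent[where B = a]) (auto simp: M_def a_le)
  have "a \<le> L" using L a_le unfolding M_def by (intro LIMSEQ_le_const) auto
  have "\<exists>x \<in> far_unit_vectors (int k + 1). M (Suc k) - 1 / real (Suc k) < quad x" for k
  proof -
    have "M (Suc k) - 1 / real (Suc k) < Sup (quad ` far_unit_vectors (int k + 1))"
      by (simp add: M_def tail_sup_def add.commute)
    then show ?thesis by (rule less_cSupE) (use far_unit_vectors_nonempty in blast)+
  qed
  then obtain v where v: "\<And>k. v k \<in> far_unit_vectors (int k + 1)"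
    and v_quad: "\<And>k. M (Suc k) - 1 / real (Suc k) < quad (v k)" by metis
  define U where "U k = 2 * (C + 2) * (M k - M (Suc k) + 1 / real (Suc k)) + 2 * (M k - L)\<^sup>2" for k
  have residual: "l2_sqnorm (\<lambda>n. A (v k) n - complex_of_real L * v k n) \<le> U k" for k
  proof -
    have "2 * (C + 2) * (M k - quad (v k)) \<le> 2 * (C + 2) * (M k - M (Suc k) + 1 / real (Suc k))"
      using v_quad[of k] norm_bound_nonneg by (intro mult_left_mono) auto
    then show ?thesis
      using approximate_eigenvector_residual[OF v[of k], of L] unfolding U_def M_def by linarith
  qed
  have gap: "(\<lambda>k. M k - M (Suc k) + 1 / real (Suc k)) \<longlonglongrightarrow> L - L + 0"
    by (intro tendsto_add tendsto_diff L LIMSEQ_Suc[OF L] LIMSEQ_Suc[OF lim_inverse_n'])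
  have excess: "(\<lambda>k. (M k - L)\<^sup>2) \<longlonglongrightarrow> (L - L)\<^sup>2"
    by (intro tendsto_power tendsto_diff L tendsto_const)
  have "U \<longlonglongrightarrow> 2 * (C + 2) * (L - L + 0) + 2 * (L - L)\<^sup>2"
    unfolding U_def by (rule tendsto_add[OF tendsto_mult_left[OF gap] tendsto_mult_left[OF excess]])
  then have U0: "U \<longlonglongrightarrow> 0" by simp
  have "(\<lambda>k. l2_sqnorm (\<lambda>n. A (v k) n - complex_of_real L * v k n)) \<longlonglongrightarrow> 0"
  proof (rule tendsto_sandwich[OF _ _ tendsto_const U0])
    show "\<forall>\<^sub>F k in sequentially. 0 \<le> l2_sqnorm (\<lambda>n. A (v k) n - complex_of_real L * v k n)"
      by (simp add: l2_sqnorm_nonneg)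
    show "\<forall>\<^sub>F k in sequentially. l2_sqnorm (\<lambda>n. A (v k) n - complex_of_real L * v k n) \<le> U k"
      using residual by simp
  qed
  from tendsto_real_sqrt[OF this]
  have Weyl: "(\<lambda>k. l2_norm (\<lambda>n. A (v k) n - complex_of_real L * v k n)) \<longlonglongrightarrow> 0"
    by (simp add: l2_norm_eq_sqrt_sqnorm)
  have v_far: "v k \<in> far_unit_vectors (int k)" for k
    using far_unit_vectors_antimono[of "int k" "int k + 1"] v[of k] by auto
  have weak: "\<forall>w\<in>l2. (\<lambda>k. l2_inner (v k) w) \<longlonglongrightarrow> 0"
    using far_unit_vectors_weakly_null[of v, OF v_far] by blast
  have unit: "\<forall>k. v k \<in> l2 \<and> l2_norm (v k) = 1"
  proof
    fix k
    have "finite {n. v k n \<noteq> 0}" "l2_sqnorm (v k) = 1"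
      using v[of k] unfolding far_unit_vectors_def by auto
    then show "v k \<in> l2 \<and> l2_norm (v k) = 1"
      by (simp add: l2_finite_support l2_norm_eq_sqrt_sqnorm)
  qed
  have "complex_of_real L \<in> ess_spectrum A"
    unfolding ess_spectrum_def using unit weak Weyl by blast
  with \<open>a \<le> L\<close> show ?thesis by blast
qed

lemma uminus: "symmetric_band_operator (\<lambda>x n. - A x n) C"
proof
  show "(\<lambda>n. - A (\<lambda>n. x n + t * y n) n) = (\<lambda>n. - A x n + t * - A y n)" for x t y
    using add_scaled[of x t y] by (simp add: fun_eq_iff)
  show "- A x n = 0" if "\<And>m. \<bar>m\<bar> \<le> N + 1 \<Longrightarrow> x m = 0" "\<bar>n\<bar> \<le> N" for x N n
    using locality[OF that] by simp
  show "finite {n. - A x n \<noteq> 0}" if "finite {n. x n \<noteq> 0}" for x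
    using finite_support[OF that] by simp
  show "l2_inner (\<lambda>n. - A x n) y = l2_inner x (\<lambda>n. - A y n)"
    if "finite {n. x n \<noteq> 0}" "finite {n. y n \<noteq> 0}" for x y
    using symmetric[OF that] l2_inner_scale_left[of "-1" "A x" y] l2_inner_scale_right[of x "-1" "A y"]
    by simp
  show "l2_sqnorm (\<lambda>n. - A x n) \<le> C * l2_sqnorm x" if "finite {n. x n \<noteq> 0}" for x
    using norm_bound[OF that] by (simp add: l2_sqnorm_uminus)
qed

lemma ess_spectrum_below:
  assumes test: "\<And>N. \<exists>p\<in>far_unit_vectors N. l2_inner (A p) p = complex_of_real a"
  shows "\<exists>L\<le>a. complex_of_real L \<in> ess_spectrum A"
proof -
  interpret neg: symmetric_band_operator "\<lambda>x n. - A x n" C by (rule uminus)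
  have "\<exists>p\<in>far_unit_vectors N. l2_inner (\<lambda>n. - A p n) p = complex_of_real (- a)" for N
    using test[of N] l2_inner_scale_left[of "-1" "A p" p for p] by auto
  then obtain L where "- a \<le> L" "complex_of_real L \<in> ess_spectrum (\<lambda>x n. - A x n)"
    using neg.ess_spectrum_above by blast
  then show ?thesis using ess_spectrum_uminus[of "complex_of_real L" A] by (intro exI[of _ "- L"]) auto
qed

end

lemma symmetric_band_operator_jacobi:
  fixes c :: "int \<Rightarrow> real"
  assumes c: "\<And>n. \<bar>c n\<bar> \<le> B"
  shows "symmetric_band_operator (jacobi (\<lambda>n. complex_of_real (c n))) (3 * (2 + B\<^sup>2))"
proof unfold_locales
  let ?H = "jacobi (\<lambda>n. complex_of_real (c n))"
  show "?H (\<lambda>n. x n + t * y n) = (\<lambda>n. ?H x n + t * ?H y n)" for x t y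
    by (rule jacobi_add_scaled)
  show "?H x n = 0" if "\<And>m. \<bar>m\<bar> \<le> N + 1 \<Longrightarrow> x m = 0" "\<bar>n\<bar> \<le> N" for x N n
    using that by (rule jacobi_local)
  show "finite {n. ?H x n \<noteq> 0}" if "finite {n. x n \<noteq> 0}" for x
    using that by (rule jacobi_finite_support)
  show "l2_inner (?H x) y = l2_inner x (?H y)"
    if "finite {n. x n \<noteq> 0}" "finite {n. y n \<noteq> 0}" for x y
    using jacobi_real_symmetric[OF c l2_finite_support[OF that(1)] l2_finite_support[OF that(2)]] .
  have c': "cmod (complex_of_real (c n)) \<le> B" for n using c by simp
  show "l2_sqnorm (?H x) \<le> 3 * (2 + B\<^sup>2) * l2_sqnorm x" if "finite {n. x n \<noteq> 0}" for x
    using jacobi_l2_bound(2)[OF c' l2_finite_support[OF that]] .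
qed

section \<open>Test vectors cut out of an eigenvector\<close>

lemma jacobi_eigenvector_consecutive_zeros:
  assumes eig: "jacobi d u = (\<lambda>n. z * u n)" and zero: "u k = 0" "u (k + 1) = 0"
  shows "u n = 0"
proof -
  have rec: "u (i - 1) + u (i + 1) = (z - d i) * u i" for i
    using fun_cong[OF eig, of i] unfolding jacobi_def by (simp add: algebra_simps)
  have "u n = 0 \<and> u (n + 1) = 0"
  proof (induction n rule: int_induct[where k = k])
    case base then show ?case using zero by simp
  next
    case (step1 i) then show ?case using rec[of "i + 1"] by simp
  next
    case (step2 i) then show ?case using rec[of i] by simp
  qed
  then show ?thesis ..
qed

lemma infinite_zeros_gap:
  fixes u :: "int \<Rightarrow> 'a::zero"
  assumes "infinite {n. u n = 0}"
  obtains z1 z2 where "u z1 = 0" "u z2 = 0" "z1 + 1 < z2" "\<And>n. z1 < n \<Longrightarrow> n < z2 \<Longrightarrow> N < \<bar>n\<bar>"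
proof -
  have "(\<forall>B. \<exists>z. u z = 0 \<and> B < z) \<or> (\<forall>B. \<exists>z. u z = 0 \<and> z < B)"
  proof (rule ccontr)
    assume "\<not> ?thesis"
    then obtain B1 B2 where "\<And>z. u z = 0 \<Longrightarrow> z \<le> B1" "\<And>z. u z = 0 \<Longrightarrow> B2 \<le> z"
      by (meson not_le)
    then have "{n. u n = 0} \<subseteq> {B2..B1}" by auto
    then show False using assms finite_subset by blast
  qed
  then show ?thesis
  proof
    assume up: "\<forall>B. \<exists>z. u z = 0 \<and> B < z"
    obtain z1 where "u z1 = 0" "\<bar>N\<bar> < z1" using up by blast
    moreover obtain z2 where "u z2 = 0" "z1 + 1 < z2" using up by blast
    ultimately show ?thesis by (intro that[of z1 z2]) auto
  next
    assume down: "\<forall>B. \<exists>z. u z = 0 \<and> z < B"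
    obtain z2 where "u z2 = 0" "z2 < - \<bar>N\<bar>" using down by blast
    moreover obtain z1 where "u z1 = 0" "z1 < z2 - 1" using down by blast
    ultimately show ?thesis by (intro that[of z1 z2]) auto
  qed
qed

lemma jacobi_truncated_eigenvector:
  assumes eig: "jacobi d u = (\<lambda>n. z * u n)" and zero: "u z1 = 0" "u z2 = 0"
    and p: "\<And>n. p n = (if z1 < n \<and> n < z2 then u n else 0)"
  shows "finite {n. p n \<noteq> 0}" "l2_inner (jacobi d p) p = z * l2_sqnorm p"
proof -
  show fin: "finite {n. p n \<noteq> 0}"
    by (rule finite_subset[of _ "{z1..z2}"]) (auto simp: p split: if_splits)
  have pointwise: "jacobi d p n * cnj (p n) = z * p n * cnj (p n)" for n
  proof (cases "z1 < n \<and> n < z2")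
    case True
    then have "p (n - 1) = u (n - 1)" "p n = u n" "p (n + 1) = u (n + 1)"
      using zero unfolding p by (cases "n - 1 = z1"; cases "n + 1 = z2"; simp)+
    then show ?thesis using fun_cong[OF eig, of n] by (simp add: jacobi_def)
  next
    case False
    then have "p n = 0" unfolding p by auto
    then show ?thesis by simp
  qed
  have "l2_inner (jacobi d p) p = l2_inner (\<lambda>n. z * p n) p"
    unfolding l2_inner_def pointwise ..
  then show "l2_inner (jacobi d p) p = z * l2_sqnorm p"
    by (simp add: l2_inner_scale_left l2_inner_self l2_finite_support[OF fin])
qed

lemma jacobi_eigenvector_far_test_vectors:
  assumes eig: "jacobi d u = (\<lambda>n. z * u n)" and nonzero: "u n0 \<noteq> 0"
    and zeros: "infinite {n. u n = 0}"
  shows "\<exists>q\<in>far_unit_vectors N. l2_inner (jacobi d q) q = z"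
proof -
  obtain z1 z2 where zero: "u z1 = 0" "u z2 = 0" and gap: "z1 + 1 < z2"
    and far: "\<And>n. z1 < n \<Longrightarrow> n < z2 \<Longrightarrow> N < \<bar>n\<bar>"
    using infinite_zeros_gap[OF zeros] by metis
  define p where "p n = (if z1 < n \<and> n < z2 then u n else 0)" for n
  have fin: "finite {n. p n \<noteq> 0}" and Rayleigh: "l2_inner (jacobi d p) p = z * l2_sqnorm p"
    using jacobi_truncated_eigenvector[OF eig zero, of p] by (simp_all add: p_def)
  have "u (z1 + 1) \<noteq> 0"
    using jacobi_eigenvector_consecutive_zeros[OF eig zero(1)] nonzero by blast
  then have "p (z1 + 1) \<noteq> 0" using gap by (simp add: p_def)
  then have pos: "0 < l2_sqnorm p" by (rule l2_sqnorm_pos[OF l2_finite_support[OF fin]])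
  define q where "q n = complex_of_real (inverse (sqrt (l2_sqnorm p))) * p n" for n
  have "finite {n. q n \<noteq> 0}" unfolding q_def by (rule finite_support_mult_left[OF fin])
  moreover have "q m = 0" if "\<bar>m\<bar> \<le> N" for m
    using far[of m] that by (force simp: q_def p_def)
  moreover have "l2_sqnorm q = 1" unfolding q_def[abs_def] by (rule l2_sqnorm_normalize[OF pos])
  ultimately have "q \<in> far_unit_vectors N" unfolding far_unit_vectors_def by blast
  moreover have "l2_inner (jacobi d q) q = z"
  proof -
    define r where "r = inverse (sqrt (l2_sqnorm p))"
    have "r\<^sup>2 * l2_sqnorm p = 1" using pos by (simp add: r_def power_inverse)
    moreover have "l2_inner (jacobi d q) q = z * complex_of_real (r\<^sup>2 * l2_sqnorm p)"
      unfolding q_def[abs_def] jacobi_scale l2_inner_scale_left l2_inner_scale_right Rayleigh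
      by (simp add: r_def power2_eq_square algebra_simps)
    ultimately show ?thesis by simp
  qed
  ultimately show ?thesis by blast
qed

section \<open>Eigenvectors of boundary eigenvalues\<close>

lemma rayleigh_quotient_in_num_range:
  assumes v: "v \<in> l2" and pos: "0 < l2_sqnorm v"
  shows "l2_inner (jacobi d v) v / complex_of_real (l2_sqnorm v) \<in> num_range (jacobi d)"
proof -
  define r where "r = inverse (sqrt (l2_sqnorm v))"
  define y where "y n = complex_of_real r * v n" for n
  have "y \<in> l2" unfolding y_def[abs_def] using v by (rule l2_scale)
  moreover have "l2_norm y = 1"
    unfolding l2_norm_eq_sqrt_sqnorm y_def[abs_def] r_def l2_sqnorm_normalize[OF pos] by simp
  moreover have "l2_inner (jacobi d y) y = complex_of_real (r\<^sup>2) * l2_inner (jacobi d v) v"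
    unfolding y_def[abs_def] jacobi_scale l2_inner_scale_left l2_inner_scale_right
    by (simp add: power2_eq_square)
  moreover have "r\<^sup>2 = inverse (l2_sqnorm v)" using pos by (simp add: r_def power_inverse)
  ultimately have "y \<in> l2 \<and> l2_norm y = 1
      \<and> l2_inner (jacobi d y) y = l2_inner (jacobi d v) v / complex_of_real (l2_sqnorm v)"
    by (simp add: divide_inverse mult.commute)
  then show ?thesis unfolding num_range_def by (metis (mono_tags, lifting) mem_Collect_eq)
qed

lemma num_range_perturbation:
  assumes u: "u \<in> l2" "l2_sqnorm u = 1" and Ju: "jacobi d u = (\<lambda>n. lam * u n)"
    and w: "finite {n. w n \<noteq> 0}" "l2_inner w u = 0"
  shows "(lam + z * l2_inner (jacobi d w) u + complex_of_real ((cmod z)\<^sup>2) * l2_inner (jacobi d w) w)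
    / complex_of_real (1 + (cmod z)\<^sup>2 * l2_sqnorm w) \<in> num_range (jacobi d)"
proof -
  define v where "v n = u n + z * w n" for n
  have wl: "w \<in> l2" and Jwl: "jacobi d w \<in> l2"
    using w(1) by (auto intro: l2_finite_support jacobi_finite_support)
  have vl: "v \<in> l2" unfolding v_def[abs_def] using u(1) wl by (rule l2_add_scaled)
  have zz: "complex_of_real ((cmod z)\<^sup>2) = z * cnj z" by (rule complex_norm_square)
  have uw: "l2_inner u w = 0" using l2_inner_commute[of u w] w(2) by simp
  have uu: "l2_inner u u = 1" using l2_inner_self[OF u(1)] u(2) by simp
  have "complex_of_real (l2_sqnorm v) = l2_inner u v + z * l2_inner w v"
    unfolding l2_inner_self[OF vl, symmetric] unfolding v_def[abs_def]
    by (rule l2_inner_add_scaled_left[OF u(1) wl]) (use vl in \<open>simp add: v_def[abs_def]\<close>)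
  also have "\<dots> = 1 + complex_of_real ((cmod z)\<^sup>2 * l2_sqnorm w)"
    unfolding v_def[abs_def] l2_inner_add_scaled_right[OF u(1) u(1) wl]
      l2_inner_add_scaled_right[OF wl u(1) wl] uw uu w(2) l2_inner_self[OF wl] of_real_mult zz
    by (simp add: algebra_simps)
  finally have nv: "l2_sqnorm v = 1 + (cmod z)\<^sup>2 * l2_sqnorm w"
    by (metis of_real_1 of_real_add of_real_eq_iff)
  have Jv: "jacobi d v = (\<lambda>n. lam * u n + z * jacobi d w n)"
    unfolding v_def[abs_def] jacobi_add_scaled Ju ..
  have "l2_inner (jacobi d v) v = l2_inner (\<lambda>n. lam * u n) v + z * l2_inner (jacobi d w) v"
    unfolding Jv by (rule l2_inner_add_scaled_left[OF l2_scale[OF u(1)] Jwl vl])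
  also have "\<dots> = lam + z * l2_inner (jacobi d w) u + complex_of_real ((cmod z)\<^sup>2) * l2_inner (jacobi d w) w"
    unfolding l2_inner_scale_left v_def[abs_def] l2_inner_add_scaled_right[OF u(1) u(1) wl]
      l2_inner_add_scaled_right[OF Jwl u(1) wl] uw uu zz
    by (simp add: algebra_simps)
  finally show ?thesis
    using rayleigh_quotient_in_num_range[OF vl, of d] nv l2_sqnorm_nonneg[of w]
    by (simp add: add_pos_nonneg)
qed

text \<open>Solving for \<open>z\<close> is the fixed-point problem \<open>z = (t - lam + |z|\<^sup>2 X) / c\<close> with
  \<open>X = t \<rho> - q\<close>, whose right-hand side maps a small disc into itself when \<open>t\<close> is close
  to \<open>lam\<close>.\<close>
lemma rational_map_covers_ball:
  fixes lam c q :: complex and \<rho> :: real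
  assumes c: "c \<noteq> 0" and \<rho>: "0 \<le> \<rho>"
  shows "\<exists>e>0. ball lam e \<subseteq>
    range (\<lambda>z. (lam + z * c + complex_of_real ((cmod z)\<^sup>2) * q) / complex_of_real (1 + (cmod z)\<^sup>2 * \<rho>))"
proof -
  define G where "G = (cmod lam + 1) * \<rho> + cmod q"
  have G: "0 \<le> G" unfolding G_def using \<rho> by simp
  have c_pos: "0 < cmod c" using c by simp
  define r where "r = min 1 (cmod c / (2 * (G + 1)))"
  have r: "0 < r" "r \<le> cmod c / (2 * (G + 1))" unfolding r_def using c_pos G by auto
  define e where "e = min 1 (r * cmod c / 2)"
  have "0 < e" unfolding e_def using r c_pos by simp
  moreover have "t \<in> range (\<lambda>z. (lam + z * c + complex_of_real ((cmod z)\<^sup>2) * q)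
      / complex_of_real (1 + (cmod z)\<^sup>2 * \<rho>))" if "t \<in> ball lam e" for t
  proof -
    define y where "y = t - lam"
    have y: "cmod y \<le> 1" "cmod y \<le> r * cmod c / 2"
      using that unfolding y_def e_def by (auto simp: dist_norm norm_minus_commute)
    define X where "X = t * complex_of_real \<rho> - q"
    have XG: "cmod X \<le> G"
    proof -
      have "cmod X \<le> cmod t * \<rho> + cmod q"
        unfolding X_def using norm_triangle_ineq4[of "t * complex_of_real \<rho>" q] \<rho>
        by (simp add: norm_mult)
      also have "\<dots> \<le> G"
        unfolding G_def y_def using norm_triangle_ineq[of lam "t - lam"] y(1) \<rho>
        by (intro add_right_mono mult_right_mono) (auto simp: y_def)
      finally show ?thesis .
    qed
    define T where "T z = (y + complex_of_real ((cmod z)\<^sup>2) * X) / c" for z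
    have "continuous_on (cball 0 r) T" unfolding T_def by (intro continuous_intros) (use c in auto)
    moreover have "T \<in> cball 0 r \<rightarrow> cball 0 r"
    proof
      fix z :: complex assume "z \<in> cball 0 r"
      then have z: "cmod z \<le> r" by simp
      have "(cmod z)\<^sup>2 \<le> r * (cmod c / (2 * (G + 1)))"
        unfolding power2_eq_square using z r order_trans[OF z r(2)] by (intro mult_mono) auto
      then have "(cmod z)\<^sup>2 * cmod X \<le> r * (cmod c / (2 * (G + 1))) * G"
        using XG r G c_pos by (intro mult_mono) auto
      also have "\<dots> \<le> r * cmod c / 2"
        using G r c_pos by (simp add: field_simps mult_left_mono)
      finally have "cmod (y + complex_of_real ((cmod z)\<^sup>2) * X) \<le> r * cmod c"
        using norm_triangle_ineq[of y "complex_of_real ((cmod z)\<^sup>2) * X"] y(2)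
        by (simp add: norm_mult norm_power)
      then show "T z \<in> cball 0 r"
        unfolding T_def using c_pos by (simp add: norm_divide divide_le_eq)
    qed
    ultimately obtain z where "T z = z" using brouwer_ball[OF r(1)] by blast
    then have "z * c = y + complex_of_real ((cmod z)\<^sup>2) * X"
      unfolding T_def using c by (simp add: field_simps)
    then have "lam + z * c + complex_of_real ((cmod z)\<^sup>2) * q = t * complex_of_real (1 + (cmod z)\<^sup>2 * \<rho>)"
      unfolding X_def y_def by (simp add: algebra_simps)
    moreover have "complex_of_real (1 + (cmod z)\<^sup>2 * \<rho>) \<noteq> 0"
    proof -
      have "0 < 1 + (cmod z)\<^sup>2 * \<rho>" using \<rho> by (simp add: add_pos_nonneg)
      then show ?thesis by (simp only: of_real_eq_0_iff)
    qed
    ultimately show ?thesis by (intro range_eqI[where x = z]) simp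
  qed
  ultimately show ?thesis by blast
qed

lemma boundary_eigenvector_orthogonal:
  assumes u: "u \<in> l2" "l2_sqnorm u = 1" and Ju: "jacobi d u = (\<lambda>n. lam * u n)"
    and frontier: "lam \<in> frontier (num_range (jacobi d))"
    and w: "finite {n. w n \<noteq> 0}" "l2_inner w u = 0"
  shows "l2_inner (jacobi d w) u = 0"
proof (rule ccontr)
  assume "l2_inner (jacobi d w) u \<noteq> 0"
  from rational_map_covers_ball[OF this l2_sqnorm_nonneg]
  obtain e where "0 < e" and "ball lam e \<subseteq> num_range (jacobi d)"
    using num_range_perturbation[OF u Ju w] by blast
  then have "lam \<in> interior (num_range (jacobi d))" by (auto simp: mem_interior)
  then show False using frontier by (simp add: frontier_def)
qed

lemma l2_inner_delta: "l2_inner (\<lambda>k. if k = n then 1 else 0) f = cnj (f n)"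
  unfolding l2_inner_def by (subst infsum_finite_support[of "{n}"]) auto

lemma l2_inner_jacobi_delta:
  "l2_inner (jacobi d (\<lambda>k. if k = n then 1 else 0)) f = cnj (jacobi (\<lambda>n. cnj (d n)) f n)"
proof -
  have "l2_inner (jacobi d (\<lambda>k. if k = n then 1 else 0)) f
      = (\<Sum>k\<in>{n - 1, n, n + 1}. jacobi d (\<lambda>k. if k = n then 1 else 0) k * cnj (f k))"
    unfolding l2_inner_def by (rule infsum_finite_support) (auto simp: jacobi_def)
  then show ?thesis by (simp add: jacobi_def)
qed

lemma l2_sqnorm_eq_1_nonzero:
  assumes "l2_sqnorm u = 1"
  obtains n where "u n \<noteq> 0"
proof -
  have "u \<noteq> (\<lambda>_. 0)"
  proof
    assume "u = (\<lambda>_. 0)"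
    then have "l2_sqnorm u = 0" by (simp add: l2_sqnorm_def)
    with assms show False by simp
  qed
  then show ?thesis using that by (auto simp: fun_eq_iff)
qed

text \<open>Testing orthogonality against \<open>cnj (u m) \<delta>\<^sub>n - cnj (u n) \<delta>\<^sub>m\<close> shows that the
  adjoint image of \<open>u\<close> is proportional to \<open>u\<close>.\<close>
lemma boundary_eigenvector_adjoint:
  assumes u: "u \<in> l2" "l2_sqnorm u = 1" and Ju: "jacobi d u = (\<lambda>n. lam * u n)"
    and frontier: "lam \<in> frontier (num_range (jacobi d))"
  shows "\<exists>\<mu>. jacobi (\<lambda>n. cnj (d n)) u = (\<lambda>n. \<mu> * u n)"
proof -
  define e where "e n k = (if k = n then 1 else 0 :: complex)" for n k :: int
  let ?Js = "jacobi (\<lambda>n. cnj (d n)) u"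
  have e_fin: "finite {k. e n k \<noteq> 0}" for n unfolding e_def by simp
  have e_l2: "e n \<in> l2" "jacobi d (e n) \<in> l2" for n
    using e_fin by (auto intro: l2_finite_support jacobi_finite_support)
  have cross: "u m * ?Js n = u n * ?Js m" for m n
  proof -
    define w where "w k = cnj (u m) * e n k + (- cnj (u n)) * e m k" for k
    have w_fin: "finite {k. w k \<noteq> 0}"
      unfolding w_def by (intro finite_support_add finite_support_mult_left e_fin)
    have "l2_inner w u = cnj (u m) * l2_inner (e n) u + (- cnj (u n)) * l2_inner (e m) u"
      unfolding w_def[abs_def] l2_inner_add_scaled_left[OF l2_scale[OF e_l2(1)] e_l2(1) u(1)]
      by (simp add: l2_inner_scale_left)
    then have "l2_inner w u = 0" unfolding e_def l2_inner_delta by simp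
    from boundary_eigenvector_orthogonal[OF u Ju frontier w_fin this]
    have "l2_inner (jacobi d w) u = 0" .
    moreover have "l2_inner (jacobi d w) u
        = cnj (u m) * l2_inner (jacobi d (e n)) u + (- cnj (u n)) * l2_inner (jacobi d (e m)) u"
      unfolding w_def[abs_def] jacobi_add_scaled jacobi_scale
        l2_inner_add_scaled_left[OF l2_scale[OF e_l2(2)] e_l2(2) u(1)]
      by (simp add: l2_inner_scale_left)
    ultimately have "cnj (u m) * cnj (?Js n) = cnj (u n) * cnj (?Js m)"
      unfolding e_def l2_inner_jacobi_delta by simp
    then have "cnj (u m * ?Js n) = cnj (u n * ?Js m)" by (simp only: complex_cnj_mult)
    then show ?thesis by (simp only: complex_cnj_cancel_iff)
  qed
  obtain n0 where n0: "u n0 \<noteq> 0" using l2_sqnorm_eq_1_nonzero[OF u(2)] .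
  have "?Js n = ?Js n0 / u n0 * u n" for n
    using cross[of n0 n] n0 by (simp add: field_simps)
  then show ?thesis by blast
qed

lemma jacobi_real_part_eigenvector:
  assumes J: "jacobi d u = (\<lambda>n. lam * u n)" and adjoint: "jacobi (\<lambda>n. cnj (d n)) u = (\<lambda>n. \<mu> * u n)"
    and n0: "u n0 \<noteq> 0"
  shows "\<And>n. u n \<noteq> 0 \<Longrightarrow> Im (d n) = Im (d n0)"
    and "jacobi (\<lambda>n. complex_of_real (Re (d n))) u = (\<lambda>n. (lam - \<i> * Im (d n0)) * u n)"
proof -
  have gap: "2 * \<i> * Im (d n) * u n = (lam - \<mu>) * u n" for n
  proof -
    have "jacobi d u n - jacobi (\<lambda>n. cnj (d n)) u n = (d n - cnj (d n)) * u n"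
      unfolding jacobi_def by (simp add: algebra_simps)
    moreover have "d n - cnj (d n) = 2 * \<i> * Im (d n)" by (simp add: complex_eq_iff)
    ultimately show ?thesis unfolding J adjoint by (simp add: algebra_simps)
  qed
  have lam_mu: "lam - \<mu> = 2 * \<i> * Im (d n0)" using gap[of n0] n0 by simp
  show Im_const: "Im (d n) = Im (d n0)" if "u n \<noteq> 0" for n
    using gap[of n] that unfolding lam_mu by simp
  show "jacobi (\<lambda>n. complex_of_real (Re (d n))) u = (\<lambda>n. (lam - \<i> * Im (d n0)) * u n)"
  proof
    fix n
    have re: "complex_of_real (Re (d n)) = d n - \<i> * Im (d n)" by (simp add: complex_eq_iff)
    have "jacobi (\<lambda>n. complex_of_real (Re (d n))) u n = jacobi d u n - \<i> * Im (d n) * u n"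
      unfolding jacobi_def re by (simp add: algebra_simps)
    then have "jacobi (\<lambda>n. complex_of_real (Re (d n))) u n = lam * u n - \<i> * Im (d n) * u n"
      unfolding J .
    then show "jacobi (\<lambda>n. complex_of_real (Re (d n))) u n = (lam - \<i> * Im (d n0)) * u n"
      using Im_const[of n] by (cases "u n = 0") (auto simp: algebra_simps)
  qed
qed

lemma boundary_eigenvalue_real_part:
  assumes d: "\<And>n. cmod (d n) \<le> B" and boundary: "boundary_eigenvalue (jacobi d) lam"
  obtains u n0 where "u n0 \<noteq> 0" "\<And>n. u n \<noteq> 0 \<Longrightarrow> Im (d n) = Im lam"
    "jacobi (\<lambda>n. complex_of_real (Re (d n))) u = (\<lambda>n. complex_of_real (Re lam) * u n)"
proof -
  obtain u0 where u0: "u0 \<in> l2" "u0 \<noteq> (\<lambda>_. 0)" "jacobi d u0 = (\<lambda>n. lam * u0 n)"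
    and frontier: "lam \<in> frontier (num_range (jacobi d))"
    using boundary unfolding boundary_eigenvalue_def is_eigenvalue_def by blast
  obtain m where "u0 m \<noteq> 0" using u0(2) by (auto simp: fun_eq_iff)
  then have pos: "0 < l2_sqnorm u0" by (rule l2_sqnorm_pos[OF u0(1)])
  define u where "u n = complex_of_real (inverse (sqrt (l2_sqnorm u0))) * u0 n" for n
  have u: "u \<in> l2" "l2_sqnorm u = 1" "u m \<noteq> 0"
    using l2_scale[OF u0(1)] l2_sqnorm_normalize[OF pos] \<open>u0 m \<noteq> 0\<close> pos
    unfolding u_def[abs_def] by simp_all
  have Ju: "jacobi d u = (\<lambda>n. lam * u n)"
    unfolding u_def[abs_def] jacobi_scale u0(3) by (simp add: mult.left_commute)
  obtain \<mu> where "jacobi (\<lambda>n. cnj (d n)) u = (\<lambda>n. \<mu> * u n)"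
    using boundary_eigenvector_adjoint[OF u(1,2) Ju frontier] by blast
  note real_part = jacobi_real_part_eigenvector[OF Ju this u(3)]
  define \<alpha> where "\<alpha> = lam - \<i> * Im (d m)"
  let ?H = "jacobi (\<lambda>n. complex_of_real (Re (d n)))"
  have "\<bar>Re (d n)\<bar> \<le> B" for n using abs_Re_le_cmod[of "d n"] d[of n] by linarith
  from jacobi_real_symmetric[of "\<lambda>n. Re (d n)", OF this u(1) u(1)]
  have "l2_inner (?H u) u = cnj (l2_inner (?H u) u)"
    using l2_inner_commute[of u "?H u"] by simp
  moreover have "l2_inner (?H u) u = \<alpha>"
    unfolding real_part(2) \<alpha>_def[symmetric] l2_inner_scale_left l2_inner_self[OF u(1)] u(2) by simp
  ultimately have "\<alpha> = cnj \<alpha>" by simp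
  then have Im_lam: "Im lam = Im (d m)" and \<alpha>_real: "\<alpha> = complex_of_real (Re lam)"
    unfolding \<alpha>_def by (simp_all add: complex_eq_iff)
  show ?thesis
  proof (rule that[of u m])
    show "u m \<noteq> 0" by (rule u(3))
    show "Im (d n) = Im lam" if "u n \<noteq> 0" for n using real_part(1)[OF that] Im_lam by simp
    show "?H u = (\<lambda>n. complex_of_real (Re lam) * u n)"
      using real_part(2) unfolding \<alpha>_def[symmetric] \<alpha>_real .
  qed
qed

section \<open>The essential spectrum of \<open>J\<^sub>0 + Re D\<close>\<close>

lemma jacobi_ess_spectrum_bound:
  assumes d: "\<And>n. cmod (d n) \<le> B" and z: "z \<in> ess_spectrum (jacobi d)"
  shows "(cmod z)\<^sup>2 \<le> 6 * (2 + B\<^sup>2)"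
proof -
  obtain u where u: "\<And>k. u k \<in> l2" "\<And>k. l2_norm (u k) = 1"
    and Weyl: "(\<lambda>k. l2_norm (\<lambda>n. jacobi d (u k) n - z * u k n)) \<longlonglongrightarrow> 0"
    using z unfolding ess_spectrum_def by blast
  define D where "D k n = jacobi d (u k) n - z * u k n" for k n
  have bound: "(cmod z)\<^sup>2 \<le> 2 * (l2_norm (D k))\<^sup>2 + 6 * (2 + B\<^sup>2)" for k
  proof -
    have unit: "l2_sqnorm (u k) = 1" using u(2)[of k] by (simp add: l2_norm_eq_sqrt_sqnorm)
    have Ju: "jacobi d (u k) \<in> l2" by (rule jacobi_l2_bound(1)[OF d u(1)])
    then have Dk: "D k \<in> l2"
      unfolding D_def using l2_add_scaled[OF Ju u(1), of "- z"] by simp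
    have "(cmod z)\<^sup>2 = l2_sqnorm (\<lambda>n. jacobi d (u k) n + (-1) * D k n)"
      by (simp add: D_def l2_sqnorm_scale unit)
    also have "\<dots> \<le> 2 * l2_sqnorm (jacobi d (u k)) + 2 * l2_sqnorm (\<lambda>n. (-1) * D k n)"
      by (intro l2_sqnorm_add_le Ju l2_scale Dk)
    also have "\<dots> \<le> 2 * (3 * (2 + B\<^sup>2)) + 2 * l2_sqnorm (D k)"
      using jacobi_l2_bound(2)[of d B "u k", OF d u(1)] unit by (simp add: l2_sqnorm_uminus)
    also have "l2_sqnorm (D k) = (l2_norm (D k))\<^sup>2"
      by (simp add: l2_norm_eq_sqrt_sqnorm l2_sqnorm_nonneg)
    finally show ?thesis by simp
  qed
  have "(\<lambda>k. 2 * (l2_norm (D k))\<^sup>2 + 6 * (2 + B\<^sup>2)) \<longlonglongrightarrow> 2 * 0\<^sup>2 + 6 * (2 + B\<^sup>2)"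
    using Weyl unfolding D_def by (intro tendsto_add tendsto_mult_left tendsto_power tendsto_const)
  from LIMSEQ_le_const[OF this] bound show ?thesis by simp
qed

lemma bdd_real_ess_spectrum_jacobi:
  assumes d: "\<And>n. cmod (d n) \<le> B"
  shows "bdd_above {x. complex_of_real x \<in> ess_spectrum (jacobi d)}"
    and "bdd_below {x. complex_of_real x \<in> ess_spectrum (jacobi d)}"
proof -
  let ?S = "{x. complex_of_real x \<in> ess_spectrum (jacobi d)}"
  have bound: "\<bar>x\<bar> \<le> sqrt (6 * (2 + B\<^sup>2))" if "x \<in> ?S" for x
    using real_sqrt_le_mono[OF jacobi_ess_spectrum_bound[of d B, OF d that[unfolded mem_Collect_eq]]]
    by simp
  show "bdd_above ?S" by (rule bdd_aboveI) (use abs_le_D1[OF bound] in blast)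
  show "bdd_below ?S"
  proof (rule bdd_belowI)
    fix x assume "x \<in> ?S"
    from abs_le_D2[OF bound[OF this]] show "- sqrt (6 * (2 + B\<^sup>2)) \<le> x" by linarith
  qed
qed

theorem mainTheorem11:
  fixes d :: "int \<Rightarrow> complex" and a b :: real
  assumes "bounded (range d)"
    and "boundary_eigenvalue (jacobi d) (Complex a b)"
    and "infinite {n. Im (d n) \<noteq> b}"
  shows "Inf {x::real. complex_of_real x \<in> ess_spectrum (jacobi (\<lambda>n. complex_of_real (Re (d n))))} \<le> a
       \<and> a \<le> Sup {x::real. complex_of_real x \<in> ess_spectrum (jacobi (\<lambda>n. complex_of_real (Re (d n))))}"
proof -
  let ?H = "jacobi (\<lambda>n. complex_of_real (Re (d n)))"
  let ?S = "{x::real. complex_of_real x \<in> ess_spectrum ?H}"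
  obtain B where B: "\<And>n. cmod (d n) \<le> B" using assms(1) unfolding bounded_iff by auto
  then have Re_B: "\<bar>Re (d n)\<bar> \<le> B" for n using abs_Re_le_cmod[of "d n"] order_trans by blast
  obtain u n0 where u: "u n0 \<noteq> 0" "\<And>n. u n \<noteq> 0 \<Longrightarrow> Im (d n) = b"
    and eig: "?H u = (\<lambda>n. complex_of_real a * u n)"
    using boundary_eigenvalue_real_part[OF B assms(2)] by (metis complex.sel)
  have "infinite {n. u n = 0}" using assms(3) by (rule infinite_super[rotated]) (use u(2) in auto)
  then have test: "\<exists>p\<in>far_unit_vectors N. l2_inner (?H p) p = complex_of_real a" for N
    by (rule jacobi_eigenvector_far_test_vectors[OF eig u(1)])
  interpret H: symmetric_band_operator ?H "3 * (2 + B\<^sup>2)"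
    using symmetric_band_operator_jacobi[of "\<lambda>n. Re (d n)", OF Re_B] .
  obtain L1 L2 where "a \<le> L1" "L1 \<in> ?S" "L2 \<le> a" "L2 \<in> ?S"
    using H.ess_spectrum_above[OF test] H.ess_spectrum_below[OF test] by auto
  moreover have "bdd_above ?S" "bdd_below ?S"
    using bdd_real_ess_spectrum_jacobi[of "\<lambda>n. complex_of_real (Re (d n))" B] Re_B by auto
  ultimately show ?thesis by (meson cInf_lower cSup_upper order_trans)
qed

end
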